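(* For every integer $k\ge 2$ there exists a latin square of order $2k$ which contains two disjoint indivisible $k$-plexes.
   Context: A latin square of order $n$ is an $n\times n$ array of $n$ symbols in which each symbol occurs exactly once in each row and column. A $k$-plex in a latin square of order $n$ is a set of $kn$ cells containing exactly $k$ cells from each row, exactly $k$ cells from each column, and exactly $k$ occurrences of each symbol. A $k$-plex is indivisible if it contains no $c$-plex (of the same latin square) for any $c$ with $0<c<k$. *)

theory Defs
  imports Main
begin

definition latin_square :: "nat \<Rightarrow> (nat \<Rightarrow> nat \<Rightarrow> nat) \<Rightarrow> bool" where
  "latin_square n L \<longleftrightarrow>
     (\<forall>i<n. \<forall>j<n. L i j < n) \<and>
     (\<forall>i<n. \<forall>s<n. \<exists>!j. j < n \<and> L i j = s) \<and>
     (\<forall>j<n. \<forall>s<n. \<exists>!i. i < n \<and> L i j = s)"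

definition is_plex :: "nat \<Rightarrow> (nat \<Rightarrow> nat \<Rightarrow> nat) \<Rightarrow> nat \<Rightarrow> (nat \<times> nat) set \<Rightarrow> bool" where
  "is_plex n L k P \<longleftrightarrow>
     P \<subseteq> {0..<n} \<times> {0..<n} \<and>
     card P = k * n \<and>
     (\<forall>i<n. card {j. (i, j) \<in> P} = k) \<and>
     (\<forall>j<n. card {i. (i, j) \<in> P} = k) \<and>
     (\<forall>s<n. card {(i, j). (i, j) \<in> P \<and> L i j = s} = k)"

definition indivisible_plex :: "nat \<Rightarrow> (nat \<Rightarrow> nat \<Rightarrow> nat) \<Rightarrow> nat \<Rightarrow> (nat \<times> nat) set \<Rightarrow> bool" where
  "indivisible_plex n L k P \<longleftrightarrow>
     is_plex n L k P \<and> (\<forall>c Q. 0 < c \<and> c < k \<and> Q \<subseteq> P \<longrightarrow> \<not> is_plex n L c Q)"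

end

theory Submission
  imports Defs
begin

(* Indivisibility is certified by weights: integer weights f, g, h on rows, columns and symbols
   such that every cell (i, j) of the k-plex P has weight f i + g j + h (L i j) divisible by k,
   while the total weight (sum of all f, g and h) is coprime to k.  A c-plex Q inside P meets
   every row, column and symbol c times, so its total weight is c times the total, and it is
   divisible by k; hence k divides c, which rules out 0 < c < k.

   The square is the product of the cyclic groups of orders k and 2, with the even columns of
   rows 0 and 2 exchanged and, for odd k, one 2x2 block twisted.  The plex P is given by an
   explicit table on the 2x2 blocks; its complement in the grid is the second plex.  With
   g j = j div 2 and h s = -(s div 2), the row weights i div 2 + [i = 0] (for P) and
   i div 2 - [i = 2] (for the complement) are certificates with total weight 1 and -1 mod k. *)

lemma latin_square_range:
  assumes "latin_square n L" "i < n" "j < n"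
  shows "L i j < n"
  using assms unfolding latin_square_def by (elim conjE) simp

lemma latin_square_row_unique:
  assumes "latin_square n L" "i < n" "s < n"
  shows "\<exists>!j. j < n \<and> L i j = s"
  using assms unfolding latin_square_def by (elim conjE) simp

(* A square with entries in {0..<n} whose rows and columns are injective is latin:
  an injective self-map of a finite set is onto. *)
lemma latin_squareI:
  assumes range: "\<And>i j. i < n \<Longrightarrow> j < n \<Longrightarrow> L i j < n"
    and row_inj: "\<And>i j j'. i < n \<Longrightarrow> j < n \<Longrightarrow> j' < n \<Longrightarrow> L i j = L i j' \<Longrightarrow> j = j'"
    and col_inj: "\<And>j i i'. j < n \<Longrightarrow> i < n \<Longrightarrow> i' < n \<Longrightarrow> L i j = L i' j \<Longrightarrow> i = i'"
  shows "latin_square n L"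
proof -
  have onto: "\<exists>x<n. F x = s"
    if "\<And>x. x < n \<Longrightarrow> F x < n" "\<And>x x'. x < n \<Longrightarrow> x' < n \<Longrightarrow> F x = F x' \<Longrightarrow> x = x'"
       "s < n" for F :: "nat \<Rightarrow> nat" and s
  proof -
    have "inj_on F {..<n}" "F ` {..<n} \<subseteq> {..<n}"
      using that(1,2) by (auto simp: inj_on_def)
    then have "F ` {..<n} = {..<n}" by (simp add: endo_inj_surj)
    then show ?thesis using \<open>s < n\<close> by (metis imageE lessThan_iff)
  qed
  show ?thesis
    unfolding latin_square_def
  proof (intro conjI allI impI)
    fix i j assume "i < n" "j < n"
    then show "L i j < n" by (rule range)
  next
    fix i s assume i: "i < n" and s: "s < n"
    obtain j where "j < n" "L i j = s"
      using onto[of "L i", OF range[OF i] row_inj[OF i] s] by blast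
    then show "\<exists>!j. j < n \<and> L i j = s" using row_inj[OF i] by blast
  next
    fix j s assume j: "j < n" and s: "s < n"
    obtain i where "i < n" "L i j = s"
      using onto[of "\<lambda>i. L i j", OF range[OF _ j] col_inj[OF j] s] by blast
    then show "\<exists>!i. i < n \<and> L i j = s" using col_inj[OF j] by blast
  qed
qed

lemma sum_over_constant_fibres:
  fixes F :: "nat \<Rightarrow> 'c::comm_semiring_1"
  assumes fin: "finite R" and into: "G ` R \<subseteq> {..<n}"
    and fibres: "\<And>y. y < n \<Longrightarrow> card {p\<in>R. G p = y} = c"
  shows "(\<Sum>p\<in>R. F (G p)) = of_nat c * (\<Sum>y<n. F y)"
proof -
  have "(\<Sum>p\<in>R. F (G p)) = (\<Sum>y<n. \<Sum>p\<in>{p\<in>R. G p = y}. F (G p))"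
    using sum.group[OF fin finite_lessThan into, of "\<lambda>p. F (G p)"] by simp
  also have "\<dots> = (\<Sum>y<n. of_nat c * F y)"
    by (rule sum.cong) (simp_all add: fibres)
  finally show ?thesis by (simp add: sum_distrib_left)
qed

lemma card_row_fibre: "card {p\<in>R. fst p = i} = card {j. (i, j) \<in> R}"
proof -
  have "{p\<in>R. fst p = i} = Pair i ` {j. (i, j) \<in> R}" by force
  then show ?thesis by (simp add: card_image inj_on_def)
qed

lemma card_col_fibre: "card {p\<in>R. snd p = j} = card {i. (i, j) \<in> R}"
proof -
  have "{p\<in>R. snd p = j} = (\<lambda>i. (i, j)) ` {i. (i, j) \<in> R}" by force
  then show ?thesis by (simp add: card_image inj_on_def)
qed

lemma plex_weight_sum:
  fixes f g h :: "nat \<Rightarrow> int"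
  assumes lat: "latin_square n L" and plex: "is_plex n L c R"
  shows "(\<Sum>(i, j)\<in>R. f i + g j + h (L i j))
           = int c * ((\<Sum>i<n. f i) + (\<Sum>j<n. g j) + (\<Sum>s<n. h s))"
proof -
  have sub: "R \<subseteq> {0..<n} \<times> {0..<n}" and fin: "finite R"
    using plex finite_subset unfolding is_plex_def by blast+
  have rows: "(\<Sum>p\<in>R. f (fst p)) = int c * (\<Sum>i<n. f i)"
    by (rule sum_over_constant_fibres[OF fin])
       (use sub plex in \<open>auto simp: card_row_fibre is_plex_def\<close>)
  have cols: "(\<Sum>p\<in>R. g (snd p)) = int c * (\<Sum>j<n. g j)"
    by (rule sum_over_constant_fibres[OF fin])
       (use sub plex in \<open>auto simp: card_col_fibre is_plex_def\<close>)
  have syms: "(\<Sum>p\<in>R. h (case_prod L p)) = int c * (\<Sum>s<n. h s)"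
  proof (rule sum_over_constant_fibres[OF fin])
    show "case_prod L ` R \<subseteq> {..<n}" using sub latin_square_range[OF lat] by auto
    fix s assume "s < n"
    have "{p\<in>R. case_prod L p = s} = {(i, j). (i, j) \<in> R \<and> L i j = s}" by auto
    then show "card {p\<in>R. case_prod L p = s} = c" using plex \<open>s < n\<close> unfolding is_plex_def by simp
  qed
  have "(\<Sum>(i, j)\<in>R. f i + g j + h (L i j))
      = (\<Sum>p\<in>R. f (fst p)) + (\<Sum>p\<in>R. g (snd p)) + (\<Sum>p\<in>R. h (case_prod L p))"
    by (simp add: split_def sum.distrib)
  then show ?thesis by (simp add: rows cols syms distrib_left)
qed

(* Weight certificate for indivisibility: if all cells of the k-plex P have weight
  divisible by k and the total weight is coprime to k, then a c-plex Q inside P has total weight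
  c times the total, which is divisible by k, so k divides c and c is not in 0<..<k. *)
lemma indivisible_by_weights:
  fixes f g h :: "nat \<Rightarrow> int"
  assumes lat: "latin_square n L" and plex: "is_plex n L k P"
    and weight_dvd: "\<And>i j. (i, j) \<in> P \<Longrightarrow> int k dvd f i + g j + h (L i j)"
    and total_coprime: "coprime (int k) ((\<Sum>i<n. f i) + (\<Sum>j<n. g j) + (\<Sum>s<n. h s))"
  shows "indivisible_plex n L k P"
  unfolding indivisible_plex_def
proof (intro conjI allI impI notI)
  show "is_plex n L k P" by (rule plex)
  fix c Q assume c: "0 < c \<and> c < k \<and> Q \<subseteq> P" and sub_plex: "is_plex n L c Q"
  have "int k dvd (\<Sum>(i, j)\<in>Q. f i + g j + h (L i j))"
    using c weight_dvd by (intro dvd_sum) auto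
  then have "int k dvd int c * ((\<Sum>i<n. f i) + (\<Sum>j<n. g j) + (\<Sum>s<n. h s))"
    by (simp only: plex_weight_sum[OF lat sub_plex])
  then have "k dvd c"
    using total_coprime by (simp add: coprime_dvd_mult_left_iff)
  then show False using c by (auto dest: dvd_imp_le)
qed

(* A cell set given by a predicate Phi is a k-plex once its rows and columns have k cells
  each and, describing membership in row i through the symbol instead (Psi), each symbol is
  selected in exactly k rows. *)
lemma plexI:
  assumes lat: "latin_square n L"
    and rows: "\<And>i. i < n \<Longrightarrow> card {j\<in>{..<n}. \<Phi> i j} = k"
    and cols: "\<And>j. j < n \<Longrightarrow> card {i\<in>{..<n}. \<Phi> i j} = k"
    and syms: "\<And>s. s < n \<Longrightarrow> card {i\<in>{..<n}. \<Psi> i s} = k"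
    and link: "\<And>i j. i < n \<Longrightarrow> j < n \<Longrightarrow> \<Phi> i j = \<Psi> i (L i j)"
  shows "is_plex n L k {(i, j). i < n \<and> j < n \<and> \<Phi> i j}"
proof -
  let ?P = "{(i, j). i < n \<and> j < n \<and> \<Phi> i j}"
  have sub: "?P \<subseteq> {0..<n} \<times> {0..<n}" by auto
  have row_sets: "{j. (i, j) \<in> ?P} = {j\<in>{..<n}. \<Phi> i j}" if "i < n" for i
    using that by auto
  have col_sets: "{i. (i, j) \<in> ?P} = {i\<in>{..<n}. \<Phi> i j}" if "j < n" for j
    using that by auto
  have sym_card: "card {(i, j). (i, j) \<in> ?P \<and> L i j = s} = k" if s: "s < n" for s
  proof -
    define J where "J i = (THE j. j < n \<and> L i j = s)" for i
    have J: "J i < n \<and> L i (J i) = s" if "i < n" for i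
      unfolding J_def by (rule theI') (rule latin_square_row_unique[OF lat that s])
    have J_unique: "j = J i" if "i < n" "j < n" "L i j = s" for i j
      using J latin_square_row_unique[OF lat _ s] that by metis
    have "{(i, j). (i, j) \<in> ?P \<and> L i j = s} = (\<lambda>i. (i, J i)) ` {i\<in>{..<n}. \<Psi> i s}"
      using J J_unique link by fastforce
    moreover have "inj_on (\<lambda>i. (i, J i)) {i\<in>{..<n}. \<Psi> i s}" by (auto simp: inj_on_def)
    ultimately show ?thesis using syms[OF s] by (simp add: card_image)
  qed
  have "(\<Sum>p\<in>?P. (\<lambda>_. 1::nat) (fst p)) = of_nat k * (\<Sum>i<n. (\<lambda>_. 1) i)"
  proof (rule sum_over_constant_fibres[where G = fst])
    show "finite ?P" using sub finite_subset by blast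
    show "fst ` ?P \<subseteq> {..<n}" by auto
    fix i assume "i < n"
    then show "card {p\<in>?P. fst p = i} = k"
      unfolding card_row_fibre row_sets[OF \<open>i < n\<close>] by (rule rows)
  qed
  then have "card ?P = k * n" by simp
  then show ?thesis
    unfolding is_plex_def using sub rows cols row_sets col_sets sym_card by simp
qed

lemma full_grid_plex:
  assumes "latin_square n L"
  shows "is_plex n L n ({0..<n} \<times> {0..<n})"
proof -
  have "is_plex n L n {(i, j). i < n \<and> j < n \<and> True}"
    by (rule plexI[OF assms, where \<Psi> = "\<lambda>_ _. True"]) simp_all
  moreover have "{(i, j). i < n \<and> j < n \<and> True} = {0..<n} \<times> {0..<n}" by auto
  ultimately show ?thesis by simp
qed

lemma plex_diff:
  assumes R: "is_plex n L a R" and P: "is_plex n L c P" and sub: "P \<subseteq> R"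
  shows "is_plex n L (a - c) (R - P)"
proof -
  have grid: "R \<subseteq> {0..<n} \<times> {0..<n}" using R by (simp add: is_plex_def)
  have card_diff: "card (A - B) = card A - card B" if "finite A" "B \<subseteq> A" for A B :: "'x set"
    using that by (simp add: card_Diff_subset finite_subset)
  have "finite R" using finite_subset[OF grid] by simp
  have fin_row: "finite {j. (i, j) \<in> R}" for i
    by (rule finite_subset[of _ "snd ` R"]) (use \<open>finite R\<close> in force)+
  have fin_col: "finite {i. (i, j) \<in> R}" for j
    by (rule finite_subset[of _ "fst ` R"]) (use \<open>finite R\<close> in force)+
  have fin_sym: "finite {(i, j). (i, j) \<in> R \<and> L i j = s}" for s
    by (rule finite_subset[of _ R]) (use \<open>finite R\<close> in auto)
  have "{j. (i, j) \<in> R - P} = {j. (i, j) \<in> R} - {j. (i, j) \<in> P}"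
    "{i. (i, j) \<in> R - P} = {i. (i, j) \<in> R} - {i. (i, j) \<in> P}"
    "{(i, j). (i, j) \<in> R - P \<and> L i j = s}
       = {(i, j). (i, j) \<in> R \<and> L i j = s} - {(i, j). (i, j) \<in> P \<and> L i j = s}" for i j s
    by blast+
  moreover have "{j. (i, j) \<in> P} \<subseteq> {j. (i, j) \<in> R}" "{i. (i, j) \<in> P} \<subseteq> {i. (i, j) \<in> R}"
    "{(i, j). (i, j) \<in> P \<and> L i j = s} \<subseteq> {(i, j). (i, j) \<in> R \<and> L i j = s}" for i j s
    using sub by blast+
  ultimately show ?thesis
    using R P sub grid \<open>finite R\<close> fin_row fin_col fin_sym unfolding is_plex_def
    by (auto simp: card_diff diff_mult_distrib)
qed

(* Rows, columns and symbols of the square of order 2k are written as 2t + z with a block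
  index t < k and a bit z; enc t z is this number. *)
definition enc :: "nat \<Rightarrow> bool \<Rightarrow> nat" where
  "enc t z = 2 * t + of_bool z"

lemma enc_div [simp]: "enc t z div 2 = t"
  and enc_odd [simp]: "odd (enc t z) \<longleftrightarrow> z"
  by (auto simp: enc_def)

lemma enc_halves: "enc (i div 2) (odd i) = i"
  by (simp add: enc_def)

lemma eq_by_halves:
  fixes i i' :: nat
  assumes "i div 2 = i' div 2" "odd i \<longleftrightarrow> odd i'"
  shows "i = i'"
proof -
  have "i = enc (i div 2) (odd i)" by (rule enc_halves[symmetric])
  also have "\<dots> = enc (i' div 2) (odd i')" by (simp only: assms)
  also have "\<dots> = i'" by (rule enc_halves)
  finally show ?thesis .
qed

lemma enc_inj: "enc t z = enc t' z' \<longleftrightarrow> t = t' \<and> z = z'"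
proof
  assume "enc t z = enc t' z'"
  then have "enc t z div 2 = enc t' z' div 2" "odd (enc t z) \<longleftrightarrow> odd (enc t' z')" by simp_all
  then show "t = t' \<and> z = z'" by simp
qed simp

lemma enc_less: "t < k \<Longrightarrow> enc t z < 2 * k"
  by (auto simp: enc_def)

lemma mod_add_left_inj:
  fixes b b' :: nat
  assumes "(c + b) mod k = (c + b') mod k" "b < k" "b' < k"
  shows "b = b'"
proof -
  have "int (c + b) mod int k = int (c + b') mod int k"
    using assms(1) by (simp only: of_nat_mod[symmetric])
  then have "int k dvd int b - int b'"
    by (simp add: mod_eq_dvd_iff)
  then show ?thesis
    using dvd_imp_le_int[of "int b - int b'" "int k"] assms(2,3) by (cases "b = b'") auto
qed

(* The square is a perturbation of the product of the cyclic group of order k with the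
  group of order 2: cell (2a+x, 2b+y) normally carries the symbol 2((a+b) mod k) + (x xor y).
  In the even columns of rows 0 and 2 the two rows are exchanged, i.e. the block index a is
  replaced by 1 - a there; row_shift records this. *)
definition row_shift :: "nat \<Rightarrow> bool \<Rightarrow> bool \<Rightarrow> nat" where
  "row_shift a x y = (if \<not> x \<and> \<not> y \<and> a \<le> 1 then 1 - a else a)"

lemma row_shift_inj: "row_shift a x y = row_shift a' x y \<Longrightarrow> a = a'"
  by (auto simp: row_shift_def split: if_splits)

lemma row_shift_less: "2 \<le> k \<Longrightarrow> a < k \<Longrightarrow> row_shift a x y < k"
  by (auto simp: row_shift_def)

lemma row_shift_eq_2: "row_shift a x y = 2 \<longleftrightarrow> a = 2"
  by (auto simp: row_shift_def)

(* For odd k the 2x2 block in block position (2, 1) has its two symbols interchanged. *)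
definition twisted :: "nat \<Rightarrow> nat \<Rightarrow> nat \<Rightarrow> bool" where
  "twisted k a b \<longleftrightarrow> odd k \<and> a = 2 \<and> b = 1"

definition symbol_block :: "nat \<Rightarrow> nat \<Rightarrow> bool \<Rightarrow> nat \<Rightarrow> bool \<Rightarrow> nat" where
  "symbol_block k a x b y = (row_shift a x y + b) mod k"

definition symbol_bit :: "nat \<Rightarrow> nat \<Rightarrow> bool \<Rightarrow> nat \<Rightarrow> bool \<Rightarrow> bool" where
  "symbol_bit k a x b y \<longleftrightarrow> (x \<noteq> y) \<noteq> twisted k a b"

definition square :: "nat \<Rightarrow> nat \<Rightarrow> nat \<Rightarrow> nat" where
  "square k i j = enc (symbol_block k (i div 2) (odd i) (j div 2) (odd j))
                      (symbol_bit k (i div 2) (odd i) (j div 2) (odd j))"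

(* If the
  column bits differed, the symbol bits could only agree with exactly one of the two cells in
  the twisted block, so a = 2; there the block index (2 + b) mod k determines b, and then both
  cells are in the same block after all. *)
lemma symbol_row_inj:
  assumes k: "2 \<le> k" and bounds: "b < k" "b' < k"
    and block: "symbol_block k a x b y = symbol_block k a x b' y'"
    and bit: "symbol_bit k a x b y = symbol_bit k a x b' y'"
  shows "b = b' \<and> y = y'"
proof (cases "y = y'")
  case True
  then show ?thesis
    using block bounds mod_add_left_inj unfolding symbol_block_def by blast
next
  case False
  then have "twisted k a b \<noteq> twisted k a b'" using bit unfolding symbol_bit_def by auto
  then have "a = 2" unfolding twisted_def by auto
  then have "(2 + b) mod k = (2 + b') mod k"
    using block unfolding symbol_block_def by (simp add: row_shift_def)
  then have "b = b'" using bounds mod_add_left_inj by blast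
  with \<open>twisted k a b \<noteq> twisted k a b'\<close> show ?thesis by simp
qed

(* Within a column, block index and bit of the symbol determine the row, since row_shift is
  a permutation of the block indices fixing 2. *)
lemma symbol_col_inj:
  assumes k: "2 \<le> k" and bounds: "a < k" "a' < k"
    and block: "symbol_block k a x b y = symbol_block k a' x' b y"
    and bit: "symbol_bit k a x b y = symbol_bit k a' x' b y"
  shows "a = a' \<and> x = x'"
proof -
  have "(b + row_shift a x y) mod k = (b + row_shift a' x' y) mod k"
    using block unfolding symbol_block_def by (metis add.commute)
  then have shift_eq: "row_shift a x y = row_shift a' x' y"
    by (rule mod_add_left_inj) (use row_shift_less[OF k] bounds in auto)
  show ?thesis
  proof (cases "twisted k a b = twisted k a' b")
    case True
    then have "x = x'" using bit unfolding symbol_bit_def by auto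
    then show ?thesis using shift_eq row_shift_inj by blast
  next
    case False
    then have "a = 2 \<or> a' = 2" unfolding twisted_def by auto
    then have "a = 2 \<and> a' = 2" using shift_eq by (metis row_shift_eq_2)
    with False show ?thesis by simp
  qed
qed

lemma square_latin:
  assumes k: "2 \<le> k"
  shows "latin_square (2 * k) (square k)"
proof (rule latin_squareI)
  fix i j assume "i < 2 * k" "j < 2 * k"
  then show "square k i j < 2 * k"
    using k unfolding square_def symbol_block_def by (intro enc_less) simp
next
  fix i j j' assume "i < 2 * k" "j < 2 * k" "j' < 2 * k" "square k i j = square k i j'"
  then have "j div 2 = j' div 2 \<and> odd j = odd j'"
    using symbol_row_inj[OF k, where a = "i div 2" and x = "odd i" and b = "j div 2" and y = "odd j"
        and b' = "j' div 2" and y' = "odd j'"]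
    unfolding square_def enc_inj by auto
  then show "j = j'" by (blast intro: eq_by_halves)
next
  fix j i i' assume "j < 2 * k" "i < 2 * k" "i' < 2 * k" "square k i j = square k i' j"
  then have "i div 2 = i' div 2 \<and> odd i = odd i'"
    using symbol_col_inj[OF k, where a = "i div 2" and x = "odd i" and a' = "i' div 2" and x' = "odd i'"
        and b = "j div 2" and y = "odd j"]
    unfolding square_def enc_inj by auto
  then show "i = i'" by (blast intro: eq_by_halves)
qed

definition P_block :: "nat \<Rightarrow> nat \<Rightarrow> bool \<Rightarrow> nat \<Rightarrow> bool \<Rightarrow> bool" where
  "P_block k a x b y = (
     if a = 0 \<and> \<not> x then \<not> y
     else if a = 1 \<and> \<not> x then y
     else if even k then (if a = 0 then \<not> y else if a = 1 then y else y = (x \<noteq> odd a))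
     else if 3 \<le> a then y = (x \<noteq> odd a)
     else if a = 0 then (b = 1 \<and> y) \<or> (2 \<le> b \<and> even b)
     else if a = 1 then b = 0 \<or> (2 \<le> b \<and> y = odd b)
     else if \<not> x then b = 1 \<or> (2 \<le> b \<and> y = even b)
     else b = 0 \<or> (b = 1 \<and> \<not> y) \<or> (2 \<le> b \<and> odd b))"

(* The same set described in each row (2a+x) through the symbol 2t+z of the cell. *)
definition P_symbol :: "nat \<Rightarrow> nat \<Rightarrow> bool \<Rightarrow> nat \<Rightarrow> bool \<Rightarrow> bool" where
  "P_symbol k a x t z = (
     if a = 0 \<and> \<not> x then \<not> z
     else if a = 1 \<and> \<not> x then z
     else if even k then (if a = 0 then z else if a = 1 then \<not> z else z = odd a)
     else if 3 \<le> a then z = odd a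
     else if a = 0 then (t = 1 \<and> \<not> z) \<or> (2 \<le> t \<and> even t)
     else if a = 1 then t = 1 \<or> (t = 0 \<and> z) \<or> (3 \<le> t \<and> z = odd t)
     else if \<not> x then t = 3 \<or> (t = 1 \<and> z) \<or> (t = 0 \<and> (k = 3 \<or> \<not> z)) \<or> (4 \<le> t \<and> z = even t)
     else t = 2 \<or> (t = 3 \<and> \<not> z) \<or> (t = 0 \<and> (5 \<le> k \<or> \<not> z)) \<or> (4 \<le> t \<and> odd t))"

lemma P_block_symbol:
  assumes k: "2 \<le> k" and bounds: "a < k" "b < k"
  shows "P_block k a x b y = P_symbol k a x (symbol_block k a x b y) (symbol_bit k a x b y)"
proof (cases "even k \<or> 3 \<le> a")
  case True
  then show ?thesis
    unfolding P_block_def P_symbol_def symbol_block_def symbol_bit_def row_shift_def twisted_def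
    by auto
next
  case False
  then have odd: "odd k" and "a \<le> 2" by auto
  have k3: "3 \<le> k" using odd k by presburger
  have mod_1: "(1 + b) mod k = (if b + 1 = k then 0 else b + 1)"
    using bounds by auto
  have mod_2: "(2 + b) mod k = (if b + 2 = k then 0 else if b + 1 = k then 1 else b + 2)"
    using bounds k3 by (auto simp: mod_if)
  have parity: "b + 1 = k \<Longrightarrow> even b" "b + 2 = k \<Longrightarrow> odd b" using odd by auto
  have small: "odd b \<Longrightarrow> 2 \<le> b \<Longrightarrow> 3 \<le> b" "even b \<Longrightarrow> b \<noteq> 0 \<Longrightarrow> 2 \<le> b" by presburger+
  from \<open>a \<le> 2\<close> consider "a = 0" | "a = 1" | "a = 2" by linarith
  then show ?thesis
    using bounds odd k3 mod_1 mod_2 parity small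
    unfolding P_block_def P_symbol_def symbol_block_def symbol_bit_def row_shift_def twisted_def
    by cases auto
qed

definition pair_count :: "(nat \<Rightarrow> bool \<Rightarrow> bool) \<Rightarrow> nat \<Rightarrow> nat" where
  "pair_count Q a = of_bool (Q a False) + of_bool (Q a True)"

lemma card_by_pairs:
  "card {i\<in>{..<2 * k}. Q (i div 2) (odd i)} = (\<Sum>a<k. pair_count Q a)"
proof (induction k)
  case (Suc k)
  have "{i\<in>{..<2 * Suc k}. Q (i div 2) (odd i)}
      = {i\<in>{..<2 * k}. Q (i div 2) (odd i)} \<union> {i\<in>{2 * k, 2 * k + 1}. Q (i div 2) (odd i)}"
    by auto
  moreover have "{i\<in>{2 * k, 2 * k + 1}. Q (i div 2) (odd i)}
      = (if Q k False then {2 * k} else {}) \<union> (if Q k True then {2 * k + 1} else {})"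
    by auto
  then have "card {i\<in>{2 * k, 2 * k + 1}. Q (i div 2) (odd i)} = pair_count Q k"
    by (simp add: pair_count_def)
  moreover have "card ({i\<in>{..<2 * k}. Q (i div 2) (odd i)} \<union> {i\<in>{2 * k, 2 * k + 1}. Q (i div 2) (odd i)})
      = card {i\<in>{..<2 * k}. Q (i div 2) (odd i)} + card {i\<in>{2 * k, 2 * k + 1}. Q (i div 2) (odd i)}"
    by (rule card_Un_disjoint) auto
  ultimately show ?case using Suc by simp
qed simp

lemma sum_head_pairs:
  fixes G :: "nat \<Rightarrow> nat"
  assumes "r \<le> k" "even (k - r)" and head: "(\<Sum>b<r. G b) = r"
    and pairs: "\<And>b. r \<le> b \<Longrightarrow> Suc b < k \<Longrightarrow> G b + G (Suc b) = 2"
  shows "(\<Sum>b<k. G b) = k"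
proof -
  obtain m where k: "k = r + 2 * m" using assms(1,2) by (metis evenE le_add_diff_inverse)
  have "(\<Sum>b<r + 2 * l. G b) = r + 2 * l" if "l \<le> m" for l
    using that
  proof (induction l)
    case (Suc l)
    have "(\<Sum>b<r + 2 * Suc l. G b) = (\<Sum>b<r + 2 * l. G b) + (G (r + 2 * l) + G (Suc (r + 2 * l)))"
      by simp
    also have "\<dots> = r + 2 * Suc l" using Suc pairs[of "r + 2 * l"] k by simp
    finally show ?case .
  qed (simp add: head)
  then show ?thesis using k by simp
qed

lemma sum_parity_head:
  fixes G :: "nat \<Rightarrow> nat"
  assumes k: "2 \<le> k"
    and even_head: "even k \<Longrightarrow> G 0 + G 1 = 2"
    and odd_head: "odd k \<Longrightarrow> G 0 + G 1 + G 2 = 3"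
    and even_pairs: "\<And>b. even k \<Longrightarrow> 2 \<le> b \<Longrightarrow> Suc b < k \<Longrightarrow> G b + G (Suc b) = 2"
    and odd_pairs: "\<And>b. odd k \<Longrightarrow> 3 \<le> b \<Longrightarrow> Suc b < k \<Longrightarrow> G b + G (Suc b) = 2"
  shows "(\<Sum>b<k. G b) = k"
proof (cases "even k")
  case True
  show ?thesis
    by (rule sum_head_pairs[where r = 2]) (use k True even_head even_pairs in \<open>auto simp: numeral_2_eq_2\<close>)
next
  case False
  have "3 \<le> k" "even (k - 3)" using k False by presburger+
  show ?thesis
    by (rule sum_head_pairs[where r = 3])
       (use \<open>3 \<le> k\<close> \<open>even (k - 3)\<close> False odd_head odd_pairs in \<open>auto simp: numeral_3_eq_3 numeral_2_eq_2\<close>)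
qed

lemma P_row_count:
  assumes "2 \<le> k" "a < k"
  shows "(\<Sum>b<k. pair_count (P_block k a x) b) = k"
  by (rule sum_parity_head) (use assms in \<open>auto simp: pair_count_def P_block_def\<close>)

lemma P_col_count:
  assumes "2 \<le> k" "b < k"
  shows "(\<Sum>a<k. pair_count (\<lambda>a x. P_block k a x b y) a) = k"
  by (rule sum_parity_head) (use assms in \<open>auto simp: pair_count_def P_block_def\<close>)

lemma P_symbol_count:
  assumes "2 \<le> k" "t < k"
  shows "(\<Sum>a<k. pair_count (\<lambda>a x. P_symbol k a x t z) a) = k"
proof -
  have odd_k: "odd k \<Longrightarrow> k = 3 \<or> 5 \<le> k" using assms(1) by presburger
  show ?thesis
    by (rule sum_parity_head) (use assms odd_k in \<open>auto simp: pair_count_def P_symbol_def\<close>)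
qed

definition in_P :: "nat \<Rightarrow> nat \<Rightarrow> nat \<Rightarrow> bool" where
  "in_P k i j \<longleftrightarrow> P_block k (i div 2) (odd i) (j div 2) (odd j)"

definition P_cells :: "nat \<Rightarrow> (nat \<times> nat) set" where
  "P_cells k = {(i, j). i < 2 * k \<and> j < 2 * k \<and> in_P k i j}"

lemma P_cells_plex:
  assumes k: "2 \<le> k"
  shows "is_plex (2 * k) (square k) k (P_cells k)"
  unfolding P_cells_def
proof (rule plexI[OF square_latin[OF k], where \<Psi> = "\<lambda>i s. P_symbol k (i div 2) (odd i) (s div 2) (odd s)"])
  fix i assume "i < 2 * k"
  then show "card {j\<in>{..<2 * k}. in_P k i j} = k"
    unfolding in_P_def card_by_pairs by (simp add: P_row_count[OF k])
next
  fix j assume "j < 2 * k"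
  then show "card {i\<in>{..<2 * k}. in_P k i j} = k"
    unfolding in_P_def card_by_pairs[where Q = "\<lambda>a x. P_block k a x (j div 2) (odd j)"]
    by (simp add: P_col_count[OF k])
next
  fix s assume "s < 2 * k"
  then show "card {i\<in>{..<2 * k}. P_symbol k (i div 2) (odd i) (s div 2) (odd s)} = k"
    unfolding card_by_pairs[where Q = "\<lambda>a x. P_symbol k a x (s div 2) (odd s)"]
    by (simp add: P_symbol_count[OF k])
next
  fix i j assume "i < 2 * k" "j < 2 * k"
  then show "in_P k i j = P_symbol k (i div 2) (odd i) (square k i j div 2) (odd (square k i j))"
    unfolding in_P_def square_def enc_div enc_odd by (intro P_block_symbol[OF k]) auto
qed

(* The certificate weights g j = j div 2 and h s = -(s div 2): on every cell the row
  weight row_shift completes them to a multiple of k. *)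
lemma shift_weight_dvd:
  "int k dvd int (row_shift a x y) + int b - int (symbol_block k a x b y)"
  unfolding symbol_block_def by (simp add: of_nat_mod)

(* On P the row shift is a + [i = 0], on its complement it is a - [i = 2]; these are the
  row weights of the two certificates. *)
lemma row_shift_in_P:
  "in_P k i j \<Longrightarrow> row_shift (i div 2) (odd i) (odd j) = i div 2 + of_bool (i = 0)"
  unfolding in_P_def P_block_def row_shift_def by auto

lemma row_shift_not_in_P:
  "\<not> in_P k i j \<Longrightarrow> int (row_shift (i div 2) (odd i) (odd j)) = int (i div 2) - of_bool (i = 2)"
  unfolding in_P_def P_block_def row_shift_def by auto

(* The block indices 0, 0, 1, 1, ..., k - 1, k - 1 of the rows add up to k (k - 1), a multiple of k;
  this makes the total weights of the certificates 1 and -1 modulo k. *)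
lemma sum_halves: "(\<Sum>i<2 * k. i div 2) = k * (k - 1 :: nat)"
proof (induction k)
  case (Suc k)
  have "(\<Sum>i<2 * Suc k. i div 2) = (\<Sum>i<2 * k. i div 2) + k + k" by simp
  also have "\<dots> = Suc k * (Suc k - 1)" using Suc by (cases k) (simp_all add: algebra_simps)
  finally show ?case .
qed simp

lemma sum_halves_dvd: "int k dvd (\<Sum>i<2 * k. int (i div 2))"
proof -
  have "(\<Sum>i<2 * k. int (i div 2)) = int k * int (k - 1)"
    using sum_halves[of k] by (simp flip: of_nat_sum)
  then show ?thesis by simp
qed

lemma coprime_multiple_plus_one: "(a::int) dvd S \<Longrightarrow> coprime a (S + 1)"
  using coprime_add_one_right coprime_divisors dvd_refl by blast

lemma coprime_multiple_minus_one: "(a::int) dvd S \<Longrightarrow> coprime a (S - 1)"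
  by (metis coprime_minus_right_iff coprime_multiple_plus_one dvd_minus_iff minus_diff_eq uminus_add_conv_diff)

lemma sum_indicator: "(\<Sum>i<n. of_bool (i = c) :: int) = of_bool (c < (n::nat))"
  by (induction n) auto

lemma P_cells_indivisible:
  assumes k: "2 \<le> k"
  shows "indivisible_plex (2 * k) (square k) k (P_cells k)"
proof (rule indivisible_by_weights[OF square_latin[OF k] P_cells_plex[OF k],
      where f = "\<lambda>i. int (i div 2) + of_bool (i = 0)" and g = "\<lambda>j. int (j div 2)"
        and h = "\<lambda>s. - int (s div 2)"])
  fix i j assume "(i, j) \<in> P_cells k"
  then have "in_P k i j" by (simp add: P_cells_def)
  then show "int k dvd int (i div 2) + of_bool (i = 0) + int (j div 2) + - int (square k i j div 2)"
    using shift_weight_dvd[of k "i div 2" "odd i" "odd j" "j div 2"] row_shift_in_P[of k i j]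
    by (simp add: square_def)
next
  show "coprime (int k) ((\<Sum>i<2 * k. int (i div 2) + of_bool (i = 0))
          + (\<Sum>j<2 * k. int (j div 2)) + (\<Sum>s<2 * k. - int (s div 2)))"
    using coprime_multiple_plus_one[OF sum_halves_dvd[of k]] k
    by (simp add: sum.distrib sum_negf sum_indicator)
qed

lemma complement_indivisible:
  assumes k: "2 \<le> k"
  shows "indivisible_plex (2 * k) (square k) k ({0..<2 * k} \<times> {0..<2 * k} - P_cells k)"
proof -
  have plex: "is_plex (2 * k) (square k) k ({0..<2 * k} \<times> {0..<2 * k} - P_cells k)"
    using plex_diff[OF full_grid_plex[OF square_latin[OF k]] P_cells_plex[OF k]]
    by (simp add: P_cells_def subset_iff)
  show ?thesis
  proof (rule indivisible_by_weights[OF square_latin[OF k] plex,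
        where f = "\<lambda>i. int (i div 2) - of_bool (i = 2)" and g = "\<lambda>j. int (j div 2)"
          and h = "\<lambda>s. - int (s div 2)"])
    fix i j assume "(i, j) \<in> {0..<2 * k} \<times> {0..<2 * k} - P_cells k"
    then have "\<not> in_P k i j" by (simp add: P_cells_def)
    then show "int k dvd int (i div 2) - of_bool (i = 2) + int (j div 2) + - int (square k i j div 2)"
      using shift_weight_dvd[of k "i div 2" "odd i" "odd j" "j div 2"] row_shift_not_in_P[of k i j]
      by (simp add: square_def)
  next
    show "coprime (int k) ((\<Sum>i<2 * k. int (i div 2) - of_bool (i = 2))
            + (\<Sum>j<2 * k. int (j div 2)) + (\<Sum>s<2 * k. - int (s div 2)))"
      using coprime_multiple_minus_one[OF sum_halves_dvd[of k]] k
      by (simp add: sum_subtractf sum_negf sum_indicator)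
  qed
qed

theorem theorem5p4:
  fixes k :: nat
  assumes "k \<ge> 2"
  shows "\<exists>L P Q. latin_square (2 * k) L \<and>
           indivisible_plex (2 * k) L k P \<and> indivisible_plex (2 * k) L k Q \<and>
           P \<inter> Q = {}"
proof (intro exI conjI)
  show "latin_square (2 * k) (square k)"
    using square_latin[OF assms] .
  show "indivisible_plex (2 * k) (square k) k (P_cells k)"
    using P_cells_indivisible[OF assms] .
  show "indivisible_plex (2 * k) (square k) k ({0..<2 * k} \<times> {0..<2 * k} - P_cells k)"
    using complement_indivisible[OF assms] .
  show "P_cells k \<inter> ({0..<2 * k} \<times> {0..<2 * k} - P_cells k) = {}"
    by blast
qed

end
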